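(* Let $X$ be a topological space and $p \in X$. If $X$ is productively countably tight at $p$, then $\mathsf{S}_1(\Omega_p, \Omega_p)$ holds, i.e., $X$ has countable strong fan tightness at $p$: for every sequence $(A_n)_{n \in \omega}$ of elements of $\Omega_p$ one can select $a_n \in A_n$ such that $\{a_n : n \in \omega\} \in \Omega_p$.
   Context: For a point $p$ of a space $X$, $\Omega_p$ denotes the collection of all sets $A \subset X$ such that $p \notin A$ and $p \in \overline{A}$. A space $Y$ has countable tightness at $y \in Y$ if whenever $y \in \overline{A}$ there is a countable $B \subset A$ with $y \in \overline{B}$. $X$ is productively countably tight at $p$ if for every space $Y$ and every $y \in Y$ such that $Y$ has countable tightness at $y$, the product $X \times Y$ has countable tightness at $\langle p, y\rangle$. *)

theory Defs
  imports "HOL-Analysis.Analysis"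
begin

definition Omega_at :: "'a topology \<Rightarrow> 'a \<Rightarrow> 'a set set" where
  "Omega_at X p = {A. A \<subseteq> topspace X \<and> p \<notin> A \<and> p \<in> X closure_of A}"

definition countably_tight_at :: "'b topology \<Rightarrow> 'b \<Rightarrow> bool" where
  "countably_tight_at Y y \<longleftrightarrow>
     (\<forall>A. A \<subseteq> topspace Y \<and> y \<in> Y closure_of A \<longrightarrow>
        (\<exists>B. B \<subseteq> A \<and> countable B \<and> y \<in> Y closure_of B))"

text \<open>Productive countable tightness at p, with the test spaces Y ranging over
  topologies on the type given by the first argument.\<close>
definition productively_countably_tight_at :: "'b itself \<Rightarrow> 'a topology \<Rightarrow> 'a \<Rightarrow> bool" where
  "productively_countably_tight_at TYPE('b) X p \<longleftrightarrow>
     (\<forall>(Y::'b topology) y. y \<in> topspace Y \<and> countably_tight_at Y y \<longrightarrow>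
        countably_tight_at (prod_topology X Y) (p, y))"

definition S1_Omega_at :: "'a topology \<Rightarrow> 'a \<Rightarrow> bool" where
  "S1_Omega_at X p \<longleftrightarrow>
     (\<forall>A :: nat \<Rightarrow> 'a set. (\<forall>n. A n \<in> Omega_at X p) \<longrightarrow>
        (\<exists>a. (\<forall>n. a n \<in> A n) \<and> range a \<in> Omega_at X p))"

end

theory Submission
  imports Defs
begin

text \<open>Fix a countable set \<open>{e\<^sub>i}\<close> that meets every \<open>A\<^sub>n\<close> in a set accumulating at \<open>p\<close>
  (countable tightness of \<open>X\<close> follows from that of the product). For \<open>c \<in> 2\<^sup>\<omega>\<close> let \<open>v\<^sub>c(n) \<in> A\<^sub>n\<close>
  be chosen among the \<open>e\<^sub>i\<close> with \<open>c(i)\<close> when possible; then every neighbourhood \<open>U\<close> of \<open>p\<close> contains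
  all of \<open>v\<^sub>c\<close> for \<open>c = {i. e\<^sub>i \<in> U}\<close>. In \<open>X\<close> times a sequential fan with spines indexed by
  \<open>2\<^sup>\<omega>\<close>, pair the \<open>k\<close>-th point of spine \<open>c\<close> with \<open>v\<^sub>c\<close> evaluated at a level coding the prefix
  \<open>c|k\<close>: these pairs accumulate at \<open>(p, apex)\<close>, so by countable tightness countably many
  spines suffice, each neighbourhood of \<open>p\<close> containing infinitely many of their values. Distinct
  spines share only finitely many levels, so a single selection \<open>g\<close> follows each of these
  countably many spines at all but finitely many levels, and \<open>range g\<close> accumulates at \<open>p\<close>.\<close>

text \<open>Spine \<open>i\<close> of the fan is the sequence \<open>enc i\<close> converging to \<open>apex\<close>; all other points are isolated.\<close>

definition fan_open :: "'b \<Rightarrow> ('i \<Rightarrow> nat \<Rightarrow> 'b) \<Rightarrow> 'b set \<Rightarrow> bool" where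
  "fan_open apex enc S \<longleftrightarrow> (apex \<in> S \<longrightarrow> (\<forall>i. finite {k. enc i k \<notin> S}))"

definition fan_topology :: "'b \<Rightarrow> ('i \<Rightarrow> nat \<Rightarrow> 'b) \<Rightarrow> 'b topology" where
  "fan_topology apex enc = topology (fan_open apex enc)"

lemma istopology_fan_open: "istopology (fan_open apex enc)"
  unfolding istopology_def
proof (intro conjI allI impI)
  fix S T assume "fan_open apex enc S" "fan_open apex enc T"
  moreover have "{k. enc i k \<notin> S \<inter> T} = {k. enc i k \<notin> S} \<union> {k. enc i k \<notin> T}" for i
    by blast
  ultimately show "fan_open apex enc (S \<inter> T)"
    unfolding fan_open_def by simp
next
  fix \<K> assume \<K>: "\<forall>S\<in>\<K>. fan_open apex enc S"
  show "fan_open apex enc (\<Union>\<K>)"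
    unfolding fan_open_def
  proof (intro impI allI)
    fix i assume "apex \<in> \<Union>\<K>"
    then obtain S where "S \<in> \<K>" "apex \<in> S" by blast
    then have "finite {k. enc i k \<notin> S}" using \<K> by (auto simp: fan_open_def)
    then show "finite {k. enc i k \<notin> \<Union>\<K>}"
      by (rule finite_subset[rotated]) (use \<open>S \<in> \<K>\<close> in auto)
  qed
qed

lemma openin_fan_topology: "openin (fan_topology apex enc) S \<longleftrightarrow> fan_open apex enc S"
  by (simp add: fan_topology_def istopology_fan_open)

lemma topspace_fan_topology [simp]: "topspace (fan_topology apex enc) = UNIV"
  using openin_subset[of "fan_topology apex enc" UNIV]
  by (auto simp: openin_fan_topology fan_open_def)

lemma apex_in_closure_of_fan_spine:
  assumes "infinite {k. enc i k \<in> A}"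
  shows "apex \<in> fan_topology apex enc closure_of A"
  unfolding in_closure_of
proof (intro conjI allI impI)
  fix V assume V: "apex \<in> V \<and> openin (fan_topology apex enc) V"
  then have "finite {k. enc i k \<notin> V}" by (auto simp: openin_fan_topology fan_open_def)
  with assms have "infinite ({k. enc i k \<in> A} - {k. enc i k \<notin> V})" by (rule Diff_infinite_finite[rotated])
  then obtain k where "enc i k \<in> A" "enc i k \<in> V" by (auto dest: infinite_imp_nonempty)
  then show "\<exists>y. y \<in> A \<and> y \<in> V" by blast
qed simp

lemma infinite_spine_if_apex_in_closure_of_fan:
  assumes "apex \<notin> A" "apex \<in> fan_topology apex enc closure_of A"
  shows "\<exists>i. infinite {k. enc i k \<in> A}"
proof (rule ccontr)
  assume "\<nexists>i. infinite {k. enc i k \<in> A}"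
  then have "openin (fan_topology apex enc) (- A)"
    by (simp add: openin_fan_topology fan_open_def)
  with assms show False
    by (auto simp: in_closure_of)
qed

lemma countably_tight_at_fan: "countably_tight_at (fan_topology apex enc) apex"
  unfolding countably_tight_at_def
proof (intro allI impI)
  fix A assume A: "A \<subseteq> topspace (fan_topology apex enc) \<and> apex \<in> fan_topology apex enc closure_of A"
  show "\<exists>B\<subseteq>A. countable B \<and> apex \<in> fan_topology apex enc closure_of B"
  proof (cases "apex \<in> A")
    case True
    moreover have "apex \<in> fan_topology apex enc closure_of {apex}"
      using closure_of_subset[of "{apex}" "fan_topology apex enc"] by simp
    ultimately show ?thesis
      by (intro exI[of _ "{apex}"]) simp
  next
    case False
    then obtain i where "infinite {k. enc i k \<in> A}"
      using infinite_spine_if_apex_in_closure_of_fan A by metis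
    then have "apex \<in> fan_topology apex enc closure_of (A \<inter> range (enc i))"
      by (intro apex_in_closure_of_fan_spine[of enc i]) simp
    then show ?thesis
      by (intro exI[of _ "A \<inter> range (enc i)"]) simp
  qed
qed

lemma countably_tight_at_prod_left:
  assumes "countably_tight_at (prod_topology X Y) (x, y)" "y \<in> topspace Y"
  shows "countably_tight_at X x"
  unfolding countably_tight_at_def
proof (intro allI impI)
  fix A assume A: "A \<subseteq> topspace X \<and> x \<in> X closure_of A"
  have "y \<in> Y closure_of {y}"
    using assms(2) closure_of_subset[of "{y}" Y] by simp
  with A have "(x, y) \<in> prod_topology X Y closure_of (A \<times> {y})"
    by (simp add: closure_of_Times)
  moreover have "A \<times> {y} \<subseteq> topspace (prod_topology X Y)"
    using A assms(2) by auto
  ultimately obtain B where B: "B \<subseteq> A \<times> {y}" "countable B"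
      "(x, y) \<in> prod_topology X Y closure_of B"
    using assms(1) unfolding countably_tight_at_def by blast
  have "B \<subseteq> fst ` B \<times> {y}" using B(1) by force
  then have "(x, y) \<in> prod_topology X Y closure_of (fst ` B \<times> {y})"
    using B(3) closure_of_mono by blast
  then have "x \<in> X closure_of fst ` B" by (simp add: closure_of_Times)
  moreover have "fst ` B \<subseteq> A" using B(1) by auto
  ultimately show "\<exists>B\<subseteq>A. countable B \<and> x \<in> X closure_of B"
    using B(2) by blast
qed

lemma countably_tight_at_closure_of_Int_sequence:
  fixes A :: "nat \<Rightarrow> 'a set"
  assumes "countably_tight_at X p" "\<And>n. A n \<subseteq> topspace X" "\<And>n. p \<in> X closure_of A n"
  obtains e :: "nat \<Rightarrow> 'a" where "\<And>n. p \<in> X closure_of (A n \<inter> range e)"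
proof -
  have "\<forall>n. \<exists>B\<subseteq>A n. countable B \<and> p \<in> X closure_of B"
    using assms unfolding countably_tight_at_def by blast
  then obtain B where B: "\<And>n. B n \<subseteq> A n" "\<And>n. countable (B n)" "\<And>n. p \<in> X closure_of B n"
    by metis
  define T where "T = (\<Union>n. B n)"
  have "B 0 \<noteq> {}"
    using B(3)[of 0] by (metis closure_of_empty empty_iff)
  then have "T \<noteq> {}"
    by (auto simp: T_def)
  moreover have "countable T"
    using B(2) by (simp add: T_def)
  ultimately have "range (from_nat_into T) = T"
    by simp
  then have "B n \<subseteq> A n \<inter> range (from_nat_into T)" for n
    using B(1) by (auto simp: T_def)
  then have "p \<in> X closure_of (A n \<inter> range (from_nat_into T))" for n
    using B(3)[of n] closure_of_mono by blast
  then show thesis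
    by (rule that)
qed

lemma countably_tight_at_obtain_selectors:
  fixes A :: "nat \<Rightarrow> 'a set"
  assumes "countably_tight_at X p" "\<And>n. A n \<subseteq> topspace X" "\<And>n. p \<in> X closure_of A n"
  obtains v :: "(nat \<Rightarrow> bool) \<Rightarrow> nat \<Rightarrow> 'a"
  where "\<And>c n. v c n \<in> A n" "\<And>U. openin X U \<Longrightarrow> p \<in> U \<Longrightarrow> \<exists>c. \<forall>n. v c n \<in> U"
proof -
  obtain e :: "nat \<Rightarrow> 'a" where e: "\<And>n. p \<in> X closure_of (A n \<inter> range e)"
    using assms by (rule countably_tight_at_closure_of_Int_sequence[of X p A]) blast
  define v where "v c n = (SOME x. x \<in> A n \<and> (A n \<inter> e ` Collect c \<noteq> {} \<longrightarrow> x \<in> e ` Collect c))"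
    for c n
  have "A n \<noteq> {}" for n
    using assms(3)[of n] by (metis closure_of_empty empty_iff)
  then have "\<exists>x. x \<in> A n \<and> (A n \<inter> e ` Collect c \<noteq> {} \<longrightarrow> x \<in> e ` Collect c)" for c n
    by blast
  then have v: "v c n \<in> A n \<and> (A n \<inter> e ` Collect c \<noteq> {} \<longrightarrow> v c n \<in> e ` Collect c)" for c n
    unfolding v_def by (rule someI_ex)
  have hit: "\<forall>n. v (\<lambda>i. e i \<in> U) n \<in> U" if "openin X U" "p \<in> U" for U
  proof
    fix n
    have "U \<inter> (A n \<inter> range e) \<noteq> {}"
      using openin_Int_closure_of_eq_empty[OF that(1)] e[of n] that(2) by blast
    then have "A n \<inter> e ` {i. e i \<in> U} \<noteq> {}"
      by blast
    then have "v (\<lambda>i. e i \<in> U) n \<in> e ` {i. e i \<in> U}"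
      using v[of "\<lambda>i. e i \<in> U" n] by simp
    then show "v (\<lambda>i. e i \<in> U) n \<in> U"
      by auto
  qed
  show thesis
  proof (rule that)
    show "v c n \<in> A n" for c n
      using v[of c n] by (rule conjunct1)
    show "\<exists>c. \<forall>n. v c n \<in> U" if "openin X U" "p \<in> U" for U
      using hit[OF that] by (rule exI[of _ "\<lambda>i. e i \<in> U"])
  qed
qed

definition prefix_code :: "(nat \<Rightarrow> bool) \<Rightarrow> nat \<Rightarrow> nat" where
  "prefix_code c k = to_nat (map c [0..<k])"

lemma finite_prefix_code_collisions:
  assumes "c \<noteq> c'"
  shows "finite {k. prefix_code c k \<in> range (prefix_code c')}"
proof -
  obtain d where d: "c d \<noteq> c' d"
    using assms by blast
  have "k \<le> d" if "prefix_code c k = prefix_code c' k'" for k k'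
  proof (rule ccontr)
    assume "\<not> k \<le> d"
    have prefixes: "map c [0..<k] = map c' [0..<k']"
      using that by (simp add: prefix_code_def)
    then have "length (map c [0..<k]) = length (map c' [0..<k'])"
      by (rule arg_cong)
    then have "k = k'"
      by simp
    with prefixes \<open>\<not> k \<le> d\<close> have "c d = c' d"
      by (metis diff_zero length_upt not_le nth_map nth_upt plus_nat.add_0)
    with d show False ..
  qed
  then have "{k. prefix_code c k \<in> range (prefix_code c')} \<subseteq> {..d}"
    by auto
  then show ?thesis
    using finite_subset by blast
qed

lemma almost_agreeing_selection:
  fixes level :: "'i \<Rightarrow> nat \<Rightarrow> nat" and v :: "'i \<Rightarrow> nat \<Rightarrow> 'x"
  assumes K: "countable K" and vA: "\<And>i n. i \<in> K \<Longrightarrow> v i n \<in> A n" and A: "\<And>n. A n \<noteq> {}"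
    and almost_disjoint:
      "\<And>i j. i \<in> K \<Longrightarrow> j \<in> K \<Longrightarrow> i \<noteq> j \<Longrightarrow> finite {k. level i k \<in> range (level j)}"
  obtains g where "\<And>n. g n \<in> A n" "\<And>i. i \<in> K \<Longrightarrow> finite {k. g (level i k) \<noteq> v i (level i k)}"
  \<comment> \<open>\<open>g n\<close> follows the first spine of an enumeration of \<open>K\<close> that reaches level \<open>n\<close>; a spine
    loses only the levels it shares with one of its finitely many predecessors.\<close>
proof -
  define ch where "ch = from_nat_into K"
  define reached where "reached n \<longleftrightarrow> K \<noteq> {} \<and> (\<exists>j. n \<in> range (level (ch j)))" for n
  define first where "first n = (LEAST j. n \<in> range (level (ch j)))" for n
  define g where "g n = (if reached n then v (ch (first n)) n else (SOME x. x \<in> A n))" for n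
  have "g n \<in> A n" for n
    using vA A from_nat_into[of K] by (simp add: g_def reached_def ch_def some_in_eq)
  moreover have "finite {k. g (level i k) \<noteq> v i (level i k)}" if "i \<in> K" for i
  proof -
    obtain j where j: "ch j = i"
      using from_nat_into_surj[OF K \<open>i \<in> K\<close>] by (auto simp: ch_def)
    define F where "F = (\<Union>j'\<in>{j'. j' < j \<and> ch j' \<noteq> i}. {k. level i k \<in> range (level (ch j'))})"
    have "finite F"
      unfolding F_def using almost_disjoint \<open>i \<in> K\<close> from_nat_into[of K] by (force simp: ch_def)
    moreover have "g (level i k) = v i (level i k)" if "k \<notin> F" for k
    proof -
      let ?n = "level i k"
      have "?n \<in> range (level (ch j))"
        using j by simp
      then have reached: "reached ?n" and first_le: "first ?n \<le> j"
        using \<open>i \<in> K\<close> by (auto simp: reached_def first_def intro: Least_le)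
      have "?n \<in> range (level (ch (first ?n)))"
        unfolding first_def by (rule LeastI[of _ j]) (use j in simp)
      then have "ch (first ?n) = i"
        using \<open>k \<notin> F\<close> first_le j unfolding F_def by (fastforce simp: le_less)
      then show ?thesis
        using reached by (simp add: g_def)
    qed
    then have "{k. g (level i k) \<noteq> v i (level i k)} \<subseteq> F"
      by blast
    ultimately show ?thesis
      by (rule finite_subset[rotated])
  qed
  ultimately show thesis
    using that by blast
qed

lemma prod_fan_closure_of_spine_graphs:
  fixes enc :: "'i \<Rightarrow> nat \<Rightarrow> 'b" and w :: "'i \<Rightarrow> nat \<Rightarrow> 'a"
  assumes p: "p \<in> topspace X"
    and hit: "\<And>U. openin X U \<Longrightarrow> p \<in> U \<Longrightarrow> \<exists>i. range (w i) \<subseteq> U"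
  shows "(p, apex) \<in> prod_topology X (fan_topology apex enc) closure_of
    range (\<lambda>(i, k). (w i k, enc i k))"
  unfolding in_closure_of
proof (intro conjI allI impI)
  fix W assume "(p, apex) \<in> W \<and> openin (prod_topology X (fan_topology apex enc)) W"
  then obtain U V where UV: "openin X U" "openin (fan_topology apex enc) V" "p \<in> U" "apex \<in> V"
      "U \<times> V \<subseteq> W"
    unfolding openin_prod_topology_alt by meson
  obtain i where "range (w i) \<subseteq> U"
    using hit UV by blast
  moreover have "finite {k. enc i k \<notin> V}"
    using UV(2,4) by (simp add: openin_fan_topology fan_open_def)
  then obtain k where "enc i k \<in> V"
    using ex_new_if_finite[OF infinite_UNIV_nat] by blast
  ultimately have "(w i k, enc i k) \<in> W"
    using UV(5) by auto
  then show "\<exists>y. y \<in> range (\<lambda>(i, k). (w i k, enc i k)) \<and> y \<in> W"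
    by blast
qed (use p in simp)

lemma infinite_spine_if_prod_fan_closure_of:
  fixes enc :: "'i \<Rightarrow> nat \<Rightarrow> 'b" and w :: "'i \<Rightarrow> nat \<Rightarrow> 'a"
  assumes inj: "inj (case_prod enc)" and apex: "\<And>i k. enc i k \<noteq> apex"
    and B: "B \<subseteq> range (\<lambda>(i, k). (w i k, enc i k))"
      "(p, apex) \<in> prod_topology X (fan_topology apex enc) closure_of B"
    and U: "openin X U" "p \<in> U"
  shows "\<exists>i. infinite {k. w i k \<in> U \<and> (w i k, enc i k) \<in> B}"
proof -
  let ?F = "fan_topology apex enc"
  define S where "S = snd ` (U \<times> UNIV \<inter> B)"
  have "openin (prod_topology X ?F) (U \<times> UNIV)"
    using U openin_topspace[of ?F] by (simp add: openin_prod_Times_iff)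
  then have "(p, apex) \<in> prod_topology X ?F closure_of (U \<times> UNIV \<inter> B)"
    using B(2) U(2) openin_Int_closure_of_subset by blast
  then have "apex \<in> ?F closure_of S"
    unfolding S_def using continuous_map_image_closure_subset[OF continuous_map_snd] by fastforce
  moreover have "apex \<notin> S"
    using B(1) apex by (fastforce simp: S_def)
  ultimately obtain i where i: "infinite {k. enc i k \<in> S}"
    using infinite_spine_if_apex_in_closure_of_fan by metis
  have "w i k \<in> U \<and> (w i k, enc i k) \<in> B" if k: "enc i k \<in> S" for k
  proof -
    obtain x where x: "x \<in> U" "(x, enc i k) \<in> B"
      using k by (auto simp: S_def)
    then obtain i' k' where "(x, enc i k) = (w i' k', enc i' k')"
      using B(1) by auto
    then have "x = w i k"
      using inj by (auto simp: inj_def)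
    then show ?thesis
      using x by simp
  qed
  then show ?thesis
    using i by (metis (mono_tags, lifting) finite_subset mem_Collect_eq subsetI)
qed

lemma countable_spines_if_prod_fan_countably_tight:
  fixes enc :: "'i \<Rightarrow> nat \<Rightarrow> 'b" and w :: "'i \<Rightarrow> nat \<Rightarrow> 'a"
  assumes ct: "countably_tight_at (prod_topology X (fan_topology apex enc)) (p, apex)"
    and inj: "inj (case_prod enc)" and apex: "\<And>i k. enc i k \<noteq> apex"
    and p: "p \<in> topspace X" and w: "\<And>i k. w i k \<in> topspace X"
    and hit: "\<And>U. openin X U \<Longrightarrow> p \<in> U \<Longrightarrow> \<exists>i. range (w i) \<subseteq> U"
  obtains K where "countable K" "\<And>U. openin X U \<Longrightarrow> p \<in> U \<Longrightarrow> \<exists>i\<in>K. infinite {k. w i k \<in> U}"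
proof -
  define f where "f = (\<lambda>(i, k). (w i k, enc i k))"
  have "range f \<subseteq> topspace (prod_topology X (fan_topology apex enc))"
    using w by (auto simp: f_def)
  moreover have "(p, apex) \<in> prod_topology X (fan_topology apex enc) closure_of range f"
    unfolding f_def by (rule prod_fan_closure_of_spine_graphs[OF p hit])
  ultimately obtain B where B: "B \<subseteq> range f" "countable B"
      "(p, apex) \<in> prod_topology X (fan_topology apex enc) closure_of B"
    using ct unfolding countably_tight_at_def by blast
  define K where "K = fst ` (f -` B)"
  have "inj f"
    using inj by (auto simp: f_def inj_def)
  moreover have "countable (f ` (f -` B))"
    using B(2) countable_subset image_vimage_subset by blast
  ultimately have "countable (f -` B)"
    using countable_image_inj_on inj_on_subset by blast
  then have "countable K"
    by (simp add: K_def)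
  moreover have "\<exists>i\<in>K. infinite {k. w i k \<in> U}" if U: "openin X U" "p \<in> U" for U
  proof -
    obtain i where i: "infinite {k. w i k \<in> U \<and> (w i k, enc i k) \<in> B}"
      using infinite_spine_if_prod_fan_closure_of[OF inj apex B(1,3)[unfolded f_def] U] by blast
    then obtain k where "f (i, k) \<in> B"
      using not_finite_existsD by (force simp: f_def)
    then have "i \<in> K"
      by (force simp: K_def)
    moreover have "infinite {k. w i k \<in> U}"
      using i by (rule infinite_super[rotated]) auto
    ultimately show ?thesis
      by blast
  qed
  ultimately show thesis
    using that by blast
qed

lemma obtain_selection_accumulating_at:
  fixes v :: "(nat \<Rightarrow> bool) \<Rightarrow> nat \<Rightarrow> 'a"
  assumes p: "p \<in> topspace X" and K: "countable K"
    and vA: "\<And>c n. v c n \<in> A n" and A: "\<And>n. A n \<noteq> {}"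
    and spine: "\<And>U. openin X U \<Longrightarrow> p \<in> U \<Longrightarrow> \<exists>c\<in>K. infinite {k. v c (prefix_code c k) \<in> U}"
  obtains g where "\<And>n. g n \<in> A n" "p \<in> X closure_of range g"
proof -
  have collisions: "finite {k. prefix_code c k \<in> range (prefix_code c')}"
    if "c \<in> K" "c' \<in> K" "c \<noteq> c'" for c c'
    using that(3) by (rule finite_prefix_code_collisions)
  obtain g where gA: "\<And>n. g n \<in> A n"
    and agree: "\<And>c. c \<in> K \<Longrightarrow> finite {k. g (prefix_code c k) \<noteq> v c (prefix_code c k)}"
    using almost_agreeing_selection[of K v A prefix_code, OF K vA A collisions] by blast
  have "p \<in> X closure_of range g"
    unfolding in_closure_of
  proof (intro conjI allI impI)
    fix U assume "p \<in> U \<and> openin X U"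
    then obtain c where "c \<in> K" and infinite: "infinite {k. v c (prefix_code c k) \<in> U}"
      using spine by blast
    have "infinite ({k. v c (prefix_code c k) \<in> U} - {k. g (prefix_code c k) \<noteq> v c (prefix_code c k)})"
      using Diff_infinite_finite[OF agree[OF \<open>c \<in> K\<close>] infinite] .
    then obtain k where "v c (prefix_code c k) \<in> U" "g (prefix_code c k) = v c (prefix_code c k)"
      by (auto dest: infinite_imp_nonempty)
    then show "\<exists>y. y \<in> range g \<and> y \<in> U"
      by (metis rangeI)
  qed (use p in simp)
  with gA show thesis
    by (rule that)
qed

lemma S1_Omega_at_if_prod_fan_countably_tight:
  fixes enc :: "(nat \<Rightarrow> bool) \<Rightarrow> nat \<Rightarrow> 'b"
  assumes p: "p \<in> topspace X"
    and ct: "countably_tight_at (prod_topology X (fan_topology apex enc)) (p, apex)"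
    and inj: "inj (case_prod enc)" and apex: "\<And>c k. enc c k \<noteq> apex"
  shows "S1_Omega_at X p"
  unfolding S1_Omega_at_def
proof (intro allI impI)
  fix A :: "nat \<Rightarrow> 'a set" assume "\<forall>n. A n \<in> Omega_at X p"
  then have AX: "\<And>n. A n \<subseteq> topspace X" and pA: "\<And>n. p \<notin> A n"
    and clA: "\<And>n. p \<in> X closure_of A n"
    by (auto simp: Omega_at_def)
  have "countably_tight_at X p"
    using countably_tight_at_prod_left[OF ct] by simp
  then obtain v :: "(nat \<Rightarrow> bool) \<Rightarrow> nat \<Rightarrow> 'a" where vA: "\<And>c n. v c n \<in> A n"
    and hit: "\<And>U. openin X U \<Longrightarrow> p \<in> U \<Longrightarrow> \<exists>c. \<forall>n. v c n \<in> U"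
    using AX clA by (rule countably_tight_at_obtain_selectors[of X p A]) blast
  define w where "w c k = v c (prefix_code c k)" for c k
  have "w c k \<in> topspace X" for c k
    using vA AX unfolding w_def by blast
  moreover have "\<exists>c. range (w c) \<subseteq> U" if "openin X U" "p \<in> U" for U
    using hit[OF that] unfolding w_def by blast
  ultimately obtain K where K: "countable K"
    and spine: "\<And>U. openin X U \<Longrightarrow> p \<in> U \<Longrightarrow> \<exists>c\<in>K. infinite {k. w c k \<in> U}"
    using countable_spines_if_prod_fan_countably_tight[OF ct inj apex p] by metis
  have A: "A n \<noteq> {}" for n
    using clA[of n] by (metis closure_of_empty empty_iff)
  obtain g where gA: "\<And>n. g n \<in> A n" and "p \<in> X closure_of range g"
    using obtain_selection_accumulating_at[OF p K vA A spine[unfolded w_def]] by blast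
  then have "range g \<in> Omega_at X p"
    using AX pA by (auto simp: Omega_at_def)
  with gA show "\<exists>a. (\<forall>n. a n \<in> A n) \<and> range a \<in> Omega_at X p"
    by blast
qed

text \<open>The hypothesis only supplies test spaces on \<open>('a \<times> nat) set\<close>, which is large enough for a fan
  with spines indexed by \<open>2\<^sup>\<omega>\<close>: \<open>c\<close> is coded on the even and \<open>k\<close> on the odd numbers.\<close>

definition fan_point :: "'a \<Rightarrow> (nat \<Rightarrow> bool) \<Rightarrow> nat \<Rightarrow> ('a \<times> nat) set" where
  "fan_point p c k = Pair p ` insert (2 * k + 1) ((*) 2 ` Collect c)"

lemma fan_point_ne_empty: "fan_point p c k \<noteq> {}"
  by (simp add: fan_point_def)

lemma inj_fan_point: "inj (case_prod (fan_point p))"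
proof (rule injI, clarify)
  fix c k c' k' assume eq: "fan_point p c k = fan_point p c' k'"
  have "c = c'"
  proof
    fix i
    have "2 * i \<noteq> 2 * j + 1" for j :: nat by presburger
    then have "c i \<longleftrightarrow> (p, 2 * i) \<in> fan_point p c k" and "c' i \<longleftrightarrow> (p, 2 * i) \<in> fan_point p c' k'"
      by (auto simp: fan_point_def)
    with eq show "c i = c' i" by simp
  qed
  moreover have "(p, 2 * k + 1) \<in> fan_point p c k"
    by (simp add: fan_point_def)
  then have "2 * k + 1 = 2 * k' + 1 \<or> (\<exists>j. 2 * k + 1 = 2 * j)"
    unfolding eq by (auto simp: fan_point_def)
  then have "k = k'"
    by presburger
  ultimately show "c = c' \<and> k = k'" by simp
qed

theorem theorem2p7:
  fixes X :: "'a topology" and p :: 'a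
  assumes "p \<in> topspace X"
    and "productively_countably_tight_at TYPE(('a \<times> nat) set) X p"
  shows "S1_Omega_at X p"
proof (rule S1_Omega_at_if_prod_fan_countably_tight)
  show "p \<in> topspace X"
    by (rule assms(1))
  show "countably_tight_at (prod_topology X (fan_topology {} (fan_point p))) (p, {})"
    using assms(2) unfolding productively_countably_tight_at_def
    by (auto simp: countably_tight_at_fan)
  show "inj (case_prod (fan_point p))"
    by (rule inj_fan_point)
  show "fan_point p c k \<noteq> {}" for c k
    by (rule fan_point_ne_empty)
qed

end
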